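(* Suppose Assumptions RA and MON hold and $\mathbb E[D\mid Z=1]-\mathbb E[D\mid Z=0]>0$. Then $p_c=\mathbb E[D\mid Z=1]-\mathbb E[D\mid Z=0]$, $p_a=\mathbb E[D\mid Z=0]$, $p_n=\mathbb E[1-D\mid Z=1]$, $p_{df}=0$; for all $y$, $$F_{11a}^{LB}(y)\equiv\max\Big\{\tfrac{\mathbb P(Y\le y,D=1\mid Z=1)-p_c}{p_a},0\Big\}\le F_{11a}(y)\le\min\Big\{\tfrac{\mathbb P(Y\le y,D=1\mid Z=1)}{p_a},1\Big\}\equiv F_{11a}^{UB}(y),$$ $$F_{00n}^{LB}(y)\equiv\max\Big\{\tfrac{\mathbb P(Y\le y,D=0\mid Z=0)-p_c}{p_n},0\Big\}\le F_{00n}(y)\le\min\Big\{\tfrac{\mathbb P(Y\le y,D=0\mid Z=0)}{p_n},1\Big\}\equiv F_{00n}^{UB}(y),$$ $F_{11c}(y)=\frac{\mathbb P(Y\le y,D=1\mid Z=1)-p_aF_{11a}(y)}{p_c}$, $F_{00c}(y)=\frac{\mathbb P(Y\le y,D=0\mid Z=0)-p_nF_{00n}(y)}{p_c}$, $F_{10a}(y)=\mathbb P(Y\le y\mid D=1,Z=0)$, $F_{01n}(y)=\mathbb P(Y\le y\mid D=0,Z=1)$. These bounds are pointwise sharp.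
   Context: Setup: binary instrument $Z$ ($0<\mathbb P(Z=1)<1$), binary treatment $D$, real outcome $Y$; potential treatments $D_0,D_1$ and potential outcomes $Y_{dz}$ ($d,z\in\{0,1\}$), with $D=D_1Z+D_0(1-Z)$, $Y=(Y_{11}Z+Y_{10}(1-Z))D+(Y_{01}Z+Y_{00}(1-Z))(1-D)$. Types $T=(D_0,D_1)$: $a=(1,1)$, $n=(0,0)$, $c=(0,1)$, $df=(1,0)$, $p_t=\mathbb P(T=t)$. RA: $Z$ independent of $(Y_{11},Y_{10},Y_{01},Y_{00},D_1,D_0)$. MON: either $D_1\ge D_0$ a.s. or $D_0\ge D_1$ a.s. (The exclusion restriction is not assumed.) $F_{dzt}(y)\equiv\mathbb P(Y_{dz}\le y\mid T=t)$. Pointwise sharp: for each $y$, every value in the stated interval is attained for some latent distribution satisfying RA and MON and consistent with the observed distribution of $(Y,D,Z)$. *)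

theory Defs
  imports "HOL-Probability.Probability"
begin

text \<open>Latent outcome: (Z, (Y11, Y10, Y01, Y00), D0, D1).
  A latent distribution is a probability measure on this space.\<close>

type_synonym latent = "bool \<times> (real \<times> real \<times> real \<times> real) \<times> bool \<times> bool"

definition restM :: "((real \<times> real \<times> real \<times> real) \<times> bool \<times> bool) measure" where
  "restM = (borel :: (real \<times> real \<times> real \<times> real) measure)
             \<Otimes>\<^sub>M (count_space UNIV \<Otimes>\<^sub>M count_space UNIV)"

definition latM :: "latent measure" where
  "latM = count_space UNIV \<Otimes>\<^sub>M restM"

definition Zv :: "latent \<Rightarrow> bool" where "Zv w = fst w"
definition D0v :: "latent \<Rightarrow> bool" where "D0v w = fst (snd (snd w))"
definition D1v :: "latent \<Rightarrow> bool" where "D1v w = snd (snd (snd w))"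

definition Yp :: "bool \<Rightarrow> bool \<Rightarrow> latent \<Rightarrow> real" where
  "Yp d z w = (case fst (snd w) of (y11, y10, y01, y00) \<Rightarrow>
      (if d then (if z then y11 else y10) else (if z then y01 else y00)))"

definition Dv :: "latent \<Rightarrow> bool" where "Dv w = (if Zv w then D1v w else D0v w)"
definition Yv :: "latent \<Rightarrow> real" where "Yv w = Yp (Dv w) (Zv w) w"

datatype ctype = TA | TN | TC | TDF

definition ctype_of :: "latent \<Rightarrow> ctype" where
  "ctype_of w = (case (D0v w, D1v w) of
      (True, True) \<Rightarrow> TA | (False, False) \<Rightarrow> TN | (False, True) \<Rightarrow> TC | (True, False) \<Rightarrow> TDF)"

definition pr :: "latent measure \<Rightarrow> (latent \<Rightarrow> bool) \<Rightarrow> real" where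
  "pr P A = measure P {w \<in> space P. A w}"

definition cpr :: "latent measure \<Rightarrow> (latent \<Rightarrow> bool) \<Rightarrow> (latent \<Rightarrow> bool) \<Rightarrow> real" where
  "cpr P A B = pr P (\<lambda>w. A w \<and> B w) / pr P B"

definition ptype :: "latent measure \<Rightarrow> ctype \<Rightarrow> real" where
  "ptype P t = pr P (\<lambda>w. ctype_of w = t)"

definition Fdzt :: "latent measure \<Rightarrow> bool \<Rightarrow> bool \<Rightarrow> ctype \<Rightarrow> real \<Rightarrow> real" where
  "Fdzt P d z t y = cpr P (\<lambda>w. Yp d z w \<le> y) (\<lambda>w. ctype_of w = t)"

definition RA :: "latent measure \<Rightarrow> bool" where
  "RA P = (fst \<in> measurable P (count_space UNIV) \<and> snd \<in> measurable P restM \<and>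
     prob_space.indep_set P
       (sigma_sets (space P) {fst -` A \<inter> space P | A. A \<in> sets (count_space UNIV)})
       (sigma_sets (space P) {snd -` A \<inter> space P | A. A \<in> sets restM}))"

definition MON :: "latent measure \<Rightarrow> bool" where
  "MON P = ((AE w in P. D0v w \<le> D1v w) \<or> (AE w in P. D1v w \<le> D0v w))"

definition latent_dist :: "latent measure \<Rightarrow> bool" where
  "latent_dist P = (sets P = sets latM \<and> prob_space P \<and> 0 < pr P Zv \<and> pr P Zv < 1)"

definition obsM :: "(real \<times> bool \<times> bool) measure" where
  "obsM = (borel :: real measure) \<Otimes>\<^sub>M (count_space UNIV \<Otimes>\<^sub>M count_space UNIV)"

definition obs :: "latent \<Rightarrow> real \<times> bool \<times> bool" where
  "obs w = (Yv w, Dv w, Zv w)"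

definition same_obs :: "latent measure \<Rightarrow> latent measure \<Rightarrow> bool" where
  "same_obs P Q = (distr P obsM obs = distr Q obsM obs)"

definition F11a_LB :: "latent measure \<Rightarrow> real \<Rightarrow> real" where
  "F11a_LB P y = max ((cpr P (\<lambda>w. Yv w \<le> y \<and> Dv w) Zv - ptype P TC) / ptype P TA) 0"
definition F11a_UB :: "latent measure \<Rightarrow> real \<Rightarrow> real" where
  "F11a_UB P y = min (cpr P (\<lambda>w. Yv w \<le> y \<and> Dv w) Zv / ptype P TA) 1"
definition F00n_LB :: "latent measure \<Rightarrow> real \<Rightarrow> real" where
  "F00n_LB P y = max ((cpr P (\<lambda>w. Yv w \<le> y \<and> \<not> Dv w) (\<lambda>w. \<not> Zv w) - ptype P TC) / ptype P TN) 0"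
definition F00n_UB :: "latent measure \<Rightarrow> real \<Rightarrow> real" where
  "F00n_UB P y = min (cpr P (\<lambda>w. Yv w \<le> y \<and> \<not> Dv w) (\<lambda>w. \<not> Zv w) / ptype P TN) 1"

end

theory Submission
  imports Defs
begin

text \<open>
  Under RA the latent law is the product of the law of Z and the law of the potential outcomes and
  treatments (Y11, Y10, Y01, Y00, D0, D1), so every observed probability conditional on Z = z is a
  probability under the latter. The first stage equals p_c - p_df > 0, so MON forces p_df = 0, which
  identifies the type shares. Given Z = 1, the observed sub-distribution of Y on D = 1 is the sum of
  the always-taker part p_a F11a and the complier part p_c F11c, each nonnegative and bounded by its
  share; this gives the bounds on F11a and the formula for F11c. Symmetrically for never-takers on
  D = 0 given Z = 0, while D = 1 given Z = 0 and D = 0 given Z = 1 contain a single type.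

  For sharpness, split the observed sub-distribution of Y on D = 1 given Z = 1 into an always-taker
  part of mass p_a taking the prescribed value at y (reweight it below and above y) and a complier
  part, and split the one on D = 0 given Z = 0 proportionally. Letting every type draw its two
  observable potential outcomes independently from its two parts gives a new law of the potential
  outcomes with the same observable parts and no defiers; paired with the old law of Z it satisfies
  RA and MON, induces the same distribution of (Y, D, Z), and attains the prescribed value.
\<close>

type_synonym pot = "(real \<times> real \<times> real \<times> real) \<times> bool \<times> bool"

definition pY :: "bool \<Rightarrow> bool \<Rightarrow> pot \<Rightarrow> real" where
  "pY d z r = (case fst r of (y11, y10, y01, y00) \<Rightarrow>
      (if d then (if z then y11 else y10) else (if z then y01 else y00)))"

definition pD :: "bool \<Rightarrow> pot \<Rightarrow> bool" where
  "pD z r = (if z then snd (snd r) else fst (snd r))"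

fun is_type :: "ctype \<Rightarrow> pot \<Rightarrow> bool" where
  "is_type TA r = (pD False r \<and> pD True r)"
| "is_type TN r = (\<not> pD False r \<and> \<not> pD True r)"
| "is_type TC r = (\<not> pD False r \<and> pD True r)"
| "is_type TDF r = (pD False r \<and> \<not> pD True r)"

lemma restM_eq:
  "restM = (borel \<Otimes>\<^sub>M borel \<Otimes>\<^sub>M borel \<Otimes>\<^sub>M borel) \<Otimes>\<^sub>M (count_space UNIV \<Otimes>\<^sub>M count_space UNIV)"
  by (simp add: restM_def borel_prod)

lemma space_restM [simp]: "space restM = UNIV"
  by (simp add: restM_def space_pair_measure)

lemma space_latM [simp]: "space latM = UNIV"
  by (simp add: latM_def space_pair_measure)

lemma measurable_pY [measurable]: "pY d z \<in> borel_measurable restM"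
  unfolding pY_def restM_eq case_prod_beta by measurable

lemma measurable_pD [measurable]: "pD z \<in> restM \<rightarrow>\<^sub>M count_space UNIV"
  unfolding pD_def restM_eq by measurable

lemma measurable_is_type [measurable]: "Measurable.pred restM (is_type t)"
proof -
  have "is_type t = (\<lambda>r. (pD False r \<longleftrightarrow> t \<in> {TA, TDF}) \<and> (pD True r \<longleftrightarrow> t \<in> {TA, TC}))"
    by (cases t) auto
  then show ?thesis by simp
qed

lemma Yp_eq: "Yp d z w = pY d z (snd w)"
  by (simp add: Yp_def pY_def split: prod.split)

lemma Dv_eq: "Dv w = pD (Zv w) (snd w)"
  by (simp add: Dv_def D0v_def D1v_def pD_def)

lemma Yv_eq: "Yv w = pY (pD (Zv w) (snd w)) (Zv w) (snd w)"
  by (simp add: Yv_def Yp_eq Dv_eq)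

lemma ctype_of_eq: "(ctype_of w = t) = is_type t (snd w)"
  by (cases t) (auto simp: ctype_of_def D0v_def D1v_def pD_def split: prod.splits bool.splits)

lemma Collect_restM [measurable (raw)]: "Measurable.pred restM A \<Longrightarrow> {r. A r} \<in> sets restM"
  by (simp add: pred_def)

definition pr_pot :: "pot measure \<Rightarrow> (pot \<Rightarrow> bool) \<Rightarrow> real" where
  "pr_pot R A = measure R {r. A r}"

lemma pr_pot_nonneg: "0 \<le> pr_pot R A"
  by (simp add: pr_pot_def)

lemma pr_pot_cong: "(\<And>r. A r = A' r) \<Longrightarrow> pr_pot R A = pr_pot R A'"
  by (simp add: pr_pot_def)

locale pot_space = prob_space R for R :: "pot measure" +
  assumes sets_eq [measurable_cong]: "sets R = sets restM"
begin

lemma space_eq [simp]: "space R = UNIV"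
  using sets_eq_imp_space_eq[OF sets_eq] by simp

lemma pr_pot_le_1: "pr_pot R A \<le> 1"
  by (simp add: pr_pot_def)

lemma pr_pot_True [simp]: "pr_pot R (\<lambda>_. True) = 1"
  by (simp add: pr_pot_def prob_space flip: space_eq)

lemma pr_pot_split:
  assumes [measurable]: "Measurable.pred restM A" "Measurable.pred restM C"
  shows "pr_pot R A = pr_pot R (\<lambda>r. A r \<and> C r) + pr_pot R (\<lambda>r. A r \<and> \<not> C r)"
proof -
  have "{r. A r} = {r. A r \<and> C r} \<union> {r. A r \<and> \<not> C r}" by auto
  moreover have "{r. A r \<and> C r} \<in> events" "{r. A r \<and> \<not> C r} \<in> events"
    unfolding sets_eq by (simp_all add: Collect_restM)
  ultimately show ?thesis
    unfolding pr_pot_def by (metis (no_types, lifting) finite_measure_Union disjoint_iff mem_Collect_eq)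
qed

lemma pr_pot_compl:
  "Measurable.pred restM A \<Longrightarrow> pr_pot R (\<lambda>r. \<not> A r) = 1 - pr_pot R A"
  using pr_pot_split[of "\<lambda>_. True" A] by simp

lemma pr_pot_conj_le:
  assumes "Measurable.pred restM A" "Measurable.pred restM C"
  shows "pr_pot R (\<lambda>r. A r \<and> C r) \<le> pr_pot R C"
proof -
  have "pr_pot R (\<lambda>r. A r \<and> C r) = pr_pot R (\<lambda>r. C r \<and> A r)"
    by (rule pr_pot_cong) auto
  then show ?thesis
    using pr_pot_split[OF assms(2,1)] pr_pot_nonneg[of R "\<lambda>r. C r \<and> \<not> A r"] by linarith
qed

lemma pr_pot_types:
  assumes [measurable]: "Measurable.pred restM X"
  shows "pr_pot R (\<lambda>r. X r \<and> pD True r) = pr_pot R (\<lambda>r. X r \<and> is_type TA r) + pr_pot R (\<lambda>r. X r \<and> is_type TC r)"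
    and "pr_pot R (\<lambda>r. X r \<and> \<not> pD False r) = pr_pot R (\<lambda>r. X r \<and> is_type TN r) + pr_pot R (\<lambda>r. X r \<and> is_type TC r)"
    and "pr_pot R (\<lambda>r. X r \<and> pD False r) = pr_pot R (\<lambda>r. X r \<and> is_type TA r) + pr_pot R (\<lambda>r. X r \<and> is_type TDF r)"
    and "pr_pot R (\<lambda>r. X r \<and> \<not> pD True r) = pr_pot R (\<lambda>r. X r \<and> is_type TN r) + pr_pot R (\<lambda>r. X r \<and> is_type TDF r)"
  using pr_pot_split[of "\<lambda>r. X r \<and> pD True r" "pD False"]
    pr_pot_split[of "\<lambda>r. X r \<and> \<not> pD False r" "pD True"]
    pr_pot_split[of "\<lambda>r. X r \<and> pD False r" "pD True"]
    pr_pot_split[of "\<lambda>r. X r \<and> \<not> pD True r" "pD False"]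
  by (simp_all add: conj_commute conj_left_commute cong: pr_pot_cong)

lemma pr_pot_types_total:
  shows "pr_pot R (pD True) = pr_pot R (is_type TA) + pr_pot R (is_type TC)"
    and "pr_pot R (\<lambda>r. \<not> pD False r) = pr_pot R (is_type TN) + pr_pot R (is_type TC)"
    and "pr_pot R (pD False) = pr_pot R (is_type TA) + pr_pot R (is_type TDF)"
    and "pr_pot R (\<lambda>r. \<not> pD True r) = pr_pot R (is_type TN) + pr_pot R (is_type TDF)"
  using pr_pot_types[of "\<lambda>_. True"] by (simp_all del: is_type.simps)

end

lemma pot_spaceI: "prob_space R \<Longrightarrow> sets R = sets restM \<Longrightarrow> pot_space R"
  by (simp add: pot_space_def pot_space_axioms_def)

section \<open>Random assignment as a product law\<close>

definition product_law :: "latent measure \<Rightarrow> bool measure \<Rightarrow> pot measure \<Rightarrow> bool" where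
  "product_law M B R \<longleftrightarrow>
     prob_space B \<and> sets B = sets (count_space UNIV) \<and> pot_space R \<and> M = B \<Otimes>\<^sub>M R"

lemma pair_measure_distr_fst_snd:
  fixes M :: "('a \<times> 'b) measure"
  assumes "prob_space M" and sets: "sets M = sets (N1 \<Otimes>\<^sub>M N2)"
    and indep: "prob_space.indep_set M (sigma_sets (space M) {fst -` A \<inter> space M | A. A \<in> sets N1})
      (sigma_sets (space M) {snd -` A \<inter> space M | A. A \<in> sets N2})"
  shows "distr M N1 fst \<Otimes>\<^sub>M distr M N2 snd = M"
proof (rule pair_measure_eqI)
  interpret prob_space M by fact
  have m: "fst \<in> M \<rightarrow>\<^sub>M N1" "snd \<in> M \<rightarrow>\<^sub>M N2"
    using sets by (simp_all cong: measurable_cong_sets)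
  then show "sigma_finite_measure (distr M N1 fst)" "sigma_finite_measure (distr M N2 snd)"
    by (simp_all add: prob_space_imp_sigma_finite prob_space_distr)
  show "sets (distr M N1 fst \<Otimes>\<^sub>M distr M N2 snd) = sets M"
    unfolding sets by (rule sets_pair_measure_cong) simp_all
  fix A S assume "A \<in> sets (distr M N1 fst)" "S \<in> sets (distr M N2 snd)"
  then have A: "A \<in> sets N1" and S: "S \<in> sets N2"
    by simp_all
  have "A \<times> S = (fst -` A \<inter> space M) \<inter> (snd -` S \<inter> space M)"
    using sets.sets_into_space[OF A] sets.sets_into_space[OF S] sets_eq_imp_space_eq[OF sets]
    by (auto simp: space_pair_measure)
  moreover have "prob ((fst -` A \<inter> space M) \<inter> (snd -` S \<inter> space M))
      = prob (fst -` A \<inter> space M) * prob (snd -` S \<inter> space M)"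
  proof (rule indep_setD[OF indep])
    show "fst -` A \<inter> space M \<in> sigma_sets (space M) {fst -` A \<inter> space M | A. A \<in> sets N1}"
      using A by (intro sigma_sets.Basic CollectI exI[of _ A]) simp
    show "snd -` S \<inter> space M \<in> sigma_sets (space M) {snd -` A \<inter> space M | A. A \<in> sets N2}"
      using S by (intro sigma_sets.Basic CollectI exI[of _ S]) simp
  qed
  ultimately show "emeasure (distr M N1 fst) A * emeasure (distr M N2 snd) S = emeasure M (A \<times> S)"
    using m A S by (simp add: emeasure_distr emeasure_eq_measure ennreal_mult')
qed

lemma RA_imp_product_law:
  assumes "latent_dist P" "RA P"
  shows "product_law P (distr P (count_space UNIV) fst) (distr P restM snd)"
proof -
  interpret prob_space P
    using assms(1) by (simp add: latent_dist_def)
  have "distr P (count_space UNIV) fst \<Otimes>\<^sub>M distr P restM snd = P"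
    using prob_space_axioms assms
    by (intro pair_measure_distr_fst_snd) (simp_all add: latent_dist_def latM_def RA_def)
  moreover have "snd \<in> P \<rightarrow>\<^sub>M restM" "fst \<in> P \<rightarrow>\<^sub>M count_space UNIV"
    using assms(2) by (simp_all add: RA_def)
  ultimately show ?thesis
    unfolding product_law_def by (simp add: pot_spaceI prob_space_distr)
qed

context
  fixes M B R
  assumes law: "product_law M B R"
begin

interpretation B: prob_space B
  using law by (simp add: product_law_def)

interpretation R: pot_space R
  using law by (simp add: product_law_def)

lemma product_law_eq: "M = B \<Otimes>\<^sub>M R"
  using law by (simp add: product_law_def)

lemma space_instrument: "space B = UNIV"
  using sets_eq_imp_space_eq[of B "count_space UNIV"] law by (simp add: product_law_def)

lemma product_law_space: "space M = UNIV"
  by (simp add: product_law_eq space_pair_measure space_instrument)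

lemma product_law_sets: "sets M = sets latM"
  using law unfolding product_law_def latM_def pot_space_def pot_space_axioms_def
  by (metis sets_pair_measure_cong)

lemma product_law_prob_space: "prob_space M"
  unfolding product_law_eq by (rule prob_space_pair) unfold_locales

lemma measure_product_law_Times:
  assumes "S \<in> sets restM"
  shows "measure M (X \<times> S) = measure B X * measure R S"
proof -
  have "X \<in> sets B" "S \<in> sets R"
    using law assms by (simp_all add: product_law_def R.sets_eq)
  then have "emeasure M (X \<times> S) = emeasure B X * emeasure R S"
    unfolding product_law_eq by (simp add: R.emeasure_pair_measure_Times)
  moreover interpret M: prob_space M by (rule product_law_prob_space)
  show ?thesis using calculation
    by (simp add: M.emeasure_eq_measure B.emeasure_eq_measure R.emeasure_eq_measure ennreal_mult'[symmetric])
qed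

lemma pr_product_law:
  assumes "Measurable.pred restM A"
  shows "pr M (\<lambda>w. Zv w = z \<and> A (snd w)) = measure B {z} * pr_pot R A"
proof -
  have "{w \<in> space M. Zv w = z \<and> A (snd w)} = {z} \<times> {r. A r}"
    by (auto simp: product_law_space Zv_def)
  then show ?thesis
    using measure_product_law_Times[OF Collect_restM[OF assms]] by (simp add: pr_def pr_pot_def)
qed

lemma pr_product_law_snd:
  assumes "Measurable.pred restM A"
  shows "pr M (\<lambda>w. A (snd w)) = pr_pot R A"
proof -
  have "{w \<in> space M. A (snd w)} = UNIV \<times> {r. A r}"
    by (auto simp: product_law_space)
  then show ?thesis
    using measure_product_law_Times[OF Collect_restM[OF assms], of UNIV] B.prob_space
    by (simp add: pr_def pr_pot_def space_instrument)
qed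

lemma measure_instrument_False: "measure B {False} = 1 - measure B {True}"
proof -
  have "space B - {True} = {False}"
    by (auto simp: space_instrument)
  then show ?thesis
    using B.prob_compl[of "{True}"] law by (simp add: product_law_def)
qed

lemma pr_Zv_product_law: "pr M Zv = measure B {True}"
  using pr_product_law[of "\<lambda>_. True" True] by simp

lemma latent_dist_product_law:
  "latent_dist M \<longleftrightarrow> 0 < measure B {True} \<and> measure B {True} < 1"
  by (simp add: latent_dist_def product_law_sets product_law_prob_space pr_Zv_product_law)

lemma instrument_pos:
  assumes "latent_dist M"
  shows "0 < measure B {z}"
  using assms by (cases z) (simp_all add: latent_dist_product_law measure_instrument_False)

lemma cpr_product_law:
  assumes "0 < measure B {z}" "Measurable.pred restM G" "Measurable.pred restM H"
    and "\<And>w. Zv w = z \<Longrightarrow> F w = G (snd w)" and "\<And>w. C w \<longleftrightarrow> Zv w = z \<and> H (snd w)"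
  shows "cpr M F C = pr_pot R (\<lambda>r. G r \<and> H r) / pr_pot R H"
proof -
  have "(\<lambda>w. F w \<and> C w) = (\<lambda>w. Zv w = z \<and> (\<lambda>r. G r \<and> H r) (snd w))"
    "C = (\<lambda>w. Zv w = z \<and> H (snd w))"
    using assms(4,5) by auto
  moreover have "Measurable.pred restM (\<lambda>r. G r \<and> H r)"
    using assms(2,3) by measurable
  ultimately show ?thesis
    unfolding cpr_def using assms(1,3) pr_product_law[of "\<lambda>r. G r \<and> H r" z]
    by (simp add: pr_product_law)
qed

lemma cpr_Y_D_given_Z:
  assumes "0 < measure B {z}" "E \<in> sets borel"
  shows "cpr M (\<lambda>w. Yv w \<in> E \<and> Dv w = d) (\<lambda>w. Zv w = z) = pr_pot R (\<lambda>r. pY d z r \<in> E \<and> pD z r = d)"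
proof -
  have "cpr M (\<lambda>w. Yv w \<in> E \<and> Dv w = d) (\<lambda>w. Zv w = z)
      = pr_pot R (\<lambda>r. (pY (pD z r) z r \<in> E \<and> pD z r = d) \<and> True) / pr_pot R (\<lambda>_. True)"
    by (rule cpr_product_law[OF assms(1)]) (use assms(2) in \<open>auto simp: Yv_eq Dv_eq\<close>)
  also have "\<dots> = pr_pot R (\<lambda>r. pY d z r \<in> E \<and> pD z r = d)"
    by (auto intro: pr_pot_cong)
  finally show ?thesis .
qed

lemma cpr_Y_given_D_Z:
  assumes "0 < measure B {z}" "E \<in> sets borel"
  shows "cpr M (\<lambda>w. Yv w \<in> E) (\<lambda>w. Dv w = d \<and> Zv w = z)
    = pr_pot R (\<lambda>r. pY d z r \<in> E \<and> pD z r = d) / pr_pot R (\<lambda>r. pD z r = d)"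
proof -
  have "cpr M (\<lambda>w. Yv w \<in> E) (\<lambda>w. Dv w = d \<and> Zv w = z)
      = pr_pot R (\<lambda>r. pY (pD z r) z r \<in> E \<and> pD z r = d) / pr_pot R (\<lambda>r. pD z r = d)"
    by (rule cpr_product_law[OF assms(1)]) (use assms(2) in \<open>auto simp: Yv_eq Dv_eq\<close>)
  also have "pr_pot R (\<lambda>r. pY (pD z r) z r \<in> E \<and> pD z r = d) = pr_pot R (\<lambda>r. pY d z r \<in> E \<and> pD z r = d)"
    by (auto intro: pr_pot_cong)
  finally show ?thesis .
qed

lemma ptype_product_law: "ptype M t = pr_pot R (is_type t)"
  unfolding ptype_def ctype_of_eq by (rule pr_product_law_snd) simp

lemma Fdzt_product_law:
  "Fdzt M d z t y = pr_pot R (\<lambda>r. pY d z r \<le> y \<and> is_type t r) / pr_pot R (is_type t)"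
proof -
  have "pr M (\<lambda>w. pY d z (snd w) \<le> y \<and> is_type t (snd w)) = pr_pot R (\<lambda>r. pY d z r \<le> y \<and> is_type t r)"
    by (rule pr_product_law_snd) simp
  moreover have "pr M (\<lambda>w. is_type t (snd w)) = pr_pot R (is_type t)"
    by (rule pr_product_law_snd) simp
  ultimately show ?thesis
    unfolding Fdzt_def cpr_def ctype_of_eq Yp_eq by simp
qed

lemma AE_product_law:
  assumes "Measurable.pred restM A"
  shows "(AE w in M. \<not> A (snd w)) \<longleftrightarrow> pr_pot R A = 0"
proof -
  interpret M: prob_space M by (rule product_law_prob_space)
  have "Measurable.pred latM (\<lambda>w. A (snd w))"
    unfolding latM_def using assms by measurable
  then have "{w \<in> space M. A (snd w)} \<in> sets M"
    unfolding product_law_sets pred_def by (simp add: product_law_space)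
  then have "(AE w in M. \<not> A (snd w)) \<longleftrightarrow> emeasure M {w \<in> space M. A (snd w)} = 0"
    by (rule AE_iff_measurable) simp
  also have "\<dots> \<longleftrightarrow> pr M (\<lambda>w. A (snd w)) = 0"
    unfolding pr_def M.emeasure_eq_measure by simp
  finally show ?thesis
    using pr_product_law_snd[OF assms] by simp
qed

lemma MON_product_law:
  "MON M \<longleftrightarrow> pr_pot R (is_type TDF) = 0 \<or> pr_pot R (is_type TC) = 0"
proof -
  have "(D0v w \<le> D1v w) = (\<not> is_type TDF (snd w))" "(D1v w \<le> D0v w) = (\<not> is_type TC (snd w))" for w
    by (auto simp: D0v_def D1v_def pD_def)
  then show ?thesis
    unfolding MON_def by (simp only: AE_product_law measurable_is_type)
qed

end

lemma Int_stable_vimage_sets: "Int_stable {f -` A \<inter> X | A. A \<in> sets N}"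
  unfolding Int_stable_def
proof (intro ballI)
  fix a b assume "a \<in> {f -` A \<inter> X | A. A \<in> sets N}" "b \<in> {f -` A \<inter> X | A. A \<in> sets N}"
  then obtain A1 A2 where "a = f -` A1 \<inter> X" "b = f -` A2 \<inter> X" "A1 \<in> sets N" "A2 \<in> sets N"
    by blast
  then show "a \<inter> b \<in> {f -` A \<inter> X | A. A \<in> sets N}"
    by (intro CollectI exI[of _ "A1 \<inter> A2"]) auto
qed

lemma product_law_RA:
  assumes law: "product_law M B R"
  shows "RA M"
proof -
  interpret M: prob_space M using product_law_prob_space[OF law] .
  interpret B: prob_space B using law by (simp add: product_law_def)
  interpret R: pot_space R using law by (simp add: product_law_def)
  have sM: "sets M = sets (count_space UNIV \<Otimes>\<^sub>M restM)"
    using product_law_sets[OF law] by (simp add: latM_def)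
  have measurable: "fst \<in> M \<rightarrow>\<^sub>M count_space UNIV" "snd \<in> M \<rightarrow>\<^sub>M restM"
    using sM by (simp_all cong: measurable_cong_sets)
  let ?A = "{fst -` A \<inter> space M | A. A \<in> sets (count_space UNIV)}"
  let ?S = "{snd -` A \<inter> space M | A. A \<in> sets restM}"
  have "M.indep_set ?A ?S"
    unfolding M.indep_sets2_eq
  proof (intro conjI ballI)
    show "?A \<subseteq> M.events" "?S \<subseteq> M.events"
      using measurable by (auto intro: measurable_sets)
    fix x y assume "x \<in> ?A" "y \<in> ?S"
    then obtain A S where xy: "x = A \<times> UNIV" "y = UNIV \<times> S" and S: "S \<in> sets restM"
      by (auto simp: product_law_space[OF law] vimage_fst vimage_snd)
    then show "M.prob (x \<inter> y) = M.prob x * M.prob y"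
      using measure_product_law_Times[OF law S, of A] measure_product_law_Times[OF law S, of UNIV]
        measure_product_law_Times[OF law sets.top[of restM], of A] B.prob_space R.prob_space
      by (simp add: Times_Int_Times space_instrument[OF law])
  qed
  then have "M.indep_set (sigma_sets (space M) ?A) (sigma_sets (space M) ?S)"
    by (rule M.indep_set_sigma_sets) (rule Int_stable_vimage_sets)+
  then show ?thesis
    unfolding RA_def using measurable by simp
qed

section \<open>Identification\<close>

lemma mixture_cdf_bounds:
  fixes m qa qc pa pc :: real
  assumes "m = qa + qc" "0 \<le> qa" "qa \<le> pa" "0 \<le> qc" "qc \<le> pc"
  shows "max ((m - pc) / pa) 0 \<le> qa / pa" "qa / pa \<le> min (m / pa) 1"
    and "0 < pc \<Longrightarrow> qc / pc = (m - pa * (qa / pa)) / pc"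
proof -
  show "max ((m - pc) / pa) 0 \<le> qa / pa" "qa / pa \<le> min (m / pa) 1"
    using assms by (cases "pa = 0"; auto simp: divide_right_mono)+
  show "0 < pc \<Longrightarrow> qc / pc = (m - pa * (qa / pa)) / pc"
    using assms by (cases "pa = 0") simp_all
qed

context pot_space
begin

lemma type_probabilities:
  assumes "pr_pot R (is_type TDF) = 0 \<or> pr_pot R (is_type TC) = 0"
    and "pr_pot R (pD False) < pr_pot R (pD True)"
  shows "pr_pot R (is_type TDF) = 0"
    and "pr_pot R (is_type TC) = pr_pot R (pD True) - pr_pot R (pD False)"
    and "pr_pot R (is_type TA) = pr_pot R (pD False)"
    and "pr_pot R (is_type TN) = pr_pot R (\<lambda>r. \<not> pD True r)"
proof -
  note types = pr_pot_types_total
  show TDF: "pr_pot R (is_type TDF) = 0"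
    using assms types(1,3) pr_pot_nonneg[of R "is_type TDF"] by linarith
  show "pr_pot R (is_type TC) = pr_pot R (pD True) - pr_pot R (pD False)"
    "pr_pot R (is_type TA) = pr_pot R (pD False)"
    "pr_pot R (is_type TN) = pr_pot R (\<lambda>r. \<not> pD True r)"
    using types TDF by linarith+
qed

lemma pr_pot_null_type:
  assumes "pr_pot R (is_type t) = 0" "Measurable.pred restM X"
  shows "pr_pot R (\<lambda>r. X r \<and> is_type t r) = 0"
  using pr_pot_conj_le[OF assms(2), of "is_type t"] assms(1) pr_pot_nonneg[of R] by (simp add: order_antisym)

lemma type_cdf_bounds:
  assumes [measurable]: "Measurable.pred restM X"
    and split: "pr_pot R (\<lambda>r. X r \<and> G r) = pr_pot R (\<lambda>r. X r \<and> is_type t r) + pr_pot R (\<lambda>r. X r \<and> is_type TC r)"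
    and "0 < pr_pot R (is_type TC)"
  defines "F \<equiv> pr_pot R (\<lambda>r. X r \<and> is_type t r) / pr_pot R (is_type t)"
  shows "max ((pr_pot R (\<lambda>r. X r \<and> G r) - pr_pot R (is_type TC)) / pr_pot R (is_type t)) 0 \<le> F"
    and "F \<le> min (pr_pot R (\<lambda>r. X r \<and> G r) / pr_pot R (is_type t)) 1"
    and "pr_pot R (\<lambda>r. X r \<and> is_type TC r) / pr_pot R (is_type TC)
      = (pr_pot R (\<lambda>r. X r \<and> G r) - pr_pot R (is_type t) * F) / pr_pot R (is_type TC)"
proof -
  have "pr_pot R (\<lambda>r. X r \<and> is_type t r) \<le> pr_pot R (is_type t)"
    "pr_pot R (\<lambda>r. X r \<and> is_type TC r) \<le> pr_pot R (is_type TC)"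
    by (rule pr_pot_conj_le; simp)+
  note bounds = mixture_cdf_bounds[OF split pr_pot_nonneg this(1) pr_pot_nonneg this(2)]
  show "max ((pr_pot R (\<lambda>r. X r \<and> G r) - pr_pot R (is_type TC)) / pr_pot R (is_type t)) 0 \<le> F"
    "F \<le> min (pr_pot R (\<lambda>r. X r \<and> G r) / pr_pot R (is_type t)) 1"
    unfolding F_def by (fact bounds(1,2))+
  show "pr_pot R (\<lambda>r. X r \<and> is_type TC r) / pr_pot R (is_type TC)
      = (pr_pot R (\<lambda>r. X r \<and> G r) - pr_pot R (is_type t) * F) / pr_pot R (is_type TC)"
    unfolding F_def by (fact bounds(3)[OF assms(3)])
qed

end

section \<open>Observational equivalence\<close>

text \<open>
  The law of Y_dz on the event D_z = d. Given Z = z it is the observed law of Y on D = d, which is why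
  it is identified.
\<close>

definition outcome_law :: "pot measure \<Rightarrow> bool \<Rightarrow> bool \<Rightarrow> real measure" where
  "outcome_law R d z = distr (density R (indicator {r. pD z r = d})) borel (pY d z)"

lemma sets_outcome_law [simp]: "sets (outcome_law R d z) = sets borel"
  by (simp add: outcome_law_def)

lemma (in pot_space) emeasure_outcome_law:
  assumes "E \<in> sets borel"
  shows "emeasure (outcome_law R d z) E = ennreal (pr_pot R (\<lambda>r. pY d z r \<in> E \<and> pD z r = d))"
proof -
  have [measurable]: "pY d z \<in> borel_measurable R" "{r. pD z r = d} \<in> events"
    by (simp_all add: sets_eq)
  have "{r. pY d z r \<in> E \<and> pD z r = d} = pY d z -` E \<inter> space R \<inter> {r. pD z r = d}"
    by auto
  moreover have "pY d z -` E \<inter> space R \<in> events"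
    using assms by measurable
  ultimately show ?thesis
    using assms
    by (simp add: outcome_law_def emeasure_distr emeasure_density 
        indicator_inter_arith[symmetric] pr_pot_def emeasure_eq_measure Int_commute)
qed

lemma (in pot_space) measure_outcome_law:
  "E \<in> sets borel \<Longrightarrow> measure (outcome_law R d z) E = pr_pot R (\<lambda>r. pY d z r \<in> E \<and> pD z r = d)"
  using emeasure_outcome_law by (simp add: measure_def pr_pot_nonneg)

lemma space_outcome_law [simp]: "space (outcome_law R d z) = UNIV"
  using sets_eq_imp_space_eq[OF sets_outcome_law] by simp

lemma (in pot_space) finite_measure_outcome_law: "finite_measure (outcome_law R d z)"
  by (rule finite_measureI) (simp add: emeasure_outcome_law)

lemma (in pot_space) mass_outcome_law:
  "measure (outcome_law R True z) UNIV = pr_pot R (pD z)"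
  "measure (outcome_law R False z) UNIV = 1 - pr_pot R (pD z)"
  using measure_outcome_law[of UNIV True z] measure_outcome_law[of UNIV False z] pr_pot_compl[of "pD z"]
  by simp_all

definition obs_pot :: "bool \<Rightarrow> pot \<Rightarrow> real \<times> bool \<times> bool" where
  "obs_pot z r = (pY (pD z r) z r, pD z r, z)"

lemma measurable_obs_pot [measurable]: "obs_pot z \<in> restM \<rightarrow>\<^sub>M obsM"
proof -
  have "obs_pot z = (\<lambda>r. if pD z r then (pY True z r, True, z) else (pY False z r, False, z))"
    by (auto simp: obs_pot_def)
  then show ?thesis
    unfolding obsM_def by simp
qed

lemma obs_eq: "obs w = obs_pot (Zv w) (snd w)"
  by (simp add: obs_def obs_pot_def Yv_eq Dv_eq)

lemma measurable_obs_slice: "S \<in> sets obsM \<Longrightarrow> {x. (x, d, z) \<in> S} \<in> sets borel"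
  using measurable_sets[of "\<lambda>x::real. (x, d, z)" borel obsM S] unfolding obsM_def
  by (simp add: vimage_def)

lemma (in pot_space) measure_vimage_obs_pot:
  assumes "S \<in> sets obsM"
  shows "measure R (obs_pot z -` S)
    = measure (outcome_law R True z) {x. (x, True, z) \<in> S} + measure (outcome_law R False z) {x. (x, False, z) \<in> S}"
proof -
  have [measurable]: "Measurable.pred restM (\<lambda>r. obs_pot z r \<in> S)"
    using assms by measurable
  have "measure R (obs_pot z -` S) = pr_pot R (\<lambda>r. obs_pot z r \<in> S)"
    by (simp add: pr_pot_def vimage_def)
  also have "\<dots> = pr_pot R (\<lambda>r. obs_pot z r \<in> S \<and> pD z r) + pr_pot R (\<lambda>r. obs_pot z r \<in> S \<and> \<not> pD z r)"
    by (rule pr_pot_split) simp_all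
  also have "\<dots> = pr_pot R (\<lambda>r. pY True z r \<in> {x. (x, True, z) \<in> S} \<and> pD z r = True)
      + pr_pot R (\<lambda>r. pY False z r \<in> {x. (x, False, z) \<in> S} \<and> pD z r = False)"
    by (auto simp: obs_pot_def intro!: arg_cong2[where f="(+)"] pr_pot_cong)
  finally show ?thesis
    using assms by (simp add: measure_outcome_law measurable_obs_slice)
qed

lemma emeasure_distr_obs:
  assumes law: "product_law M B R" and S: "S \<in> sets obsM"
  shows "emeasure (distr M obsM obs) S = ennreal (measure B {True} * measure R (obs_pot True -` S)
    + measure B {False} * measure R (obs_pot False -` S))"
proof -
  interpret M: prob_space M using product_law_prob_space[OF law] .
  have [measurable]: "obs_pot True -` S \<in> sets restM" "obs_pot False -` S \<in> sets restM"
    using measurable_sets[OF measurable_obs_pot S] by simp_all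
  have sM: "sets M = sets (count_space UNIV \<Otimes>\<^sub>M restM)"
    using product_law_sets[OF law] by (simp add: latM_def)
  have "obs \<in> M \<rightarrow>\<^sub>M obsM"
    unfolding obs_eq[abs_def] Zv_def using sM by (simp cong: measurable_cong_sets)
  moreover have "obs -` S \<inter> space M = {True} \<times> obs_pot True -` S \<union> {False} \<times> obs_pot False -` S"
  proof (rule set_eqI)
    fix x :: latent
    obtain z r where "x = (z, r)" by (cases x)
    then show "x \<in> obs -` S \<inter> space M \<longleftrightarrow> x \<in> {True} \<times> obs_pot True -` S \<union> {False} \<times> obs_pot False -` S"
      by (cases z) (auto simp: obs_eq Zv_def product_law_space[OF law])
  qed
  ultimately have "emeasure (distr M obsM obs) S = measure M ({True} \<times> obs_pot True -` S \<union> {False} \<times> obs_pot False -` S)"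
    using S by (simp add: emeasure_distr M.emeasure_eq_measure)
  moreover have "measure M ({True} \<times> obs_pot True -` S \<union> {False} \<times> obs_pot False -` S)
      = measure M ({True} \<times> obs_pot True -` S) + measure M ({False} \<times> obs_pot False -` S)"
    by (rule M.finite_measure_Union) (auto simp: sM)
  ultimately show ?thesis
    by (simp add: measure_product_law_Times[OF law])
qed

lemma same_obs_product_law:
  assumes "product_law P B R" "product_law Q B R'"
    and "\<And>d z. outcome_law R' d z = outcome_law R d z"
  shows "same_obs P Q"
  unfolding same_obs_def
proof (rule measure_eqI)
  fix S assume "S \<in> sets (distr P obsM obs)"
  then have S: "S \<in> sets obsM" by simp
  have "pot_space R" "pot_space R'"
    using assms(1,2) by (simp_all add: product_law_def)
  then show "emeasure (distr P obsM obs) S = emeasure (distr Q obsM obs) S"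
    using S by (simp add: emeasure_distr_obs[OF assms(1)] emeasure_distr_obs[OF assms(2)]
        pot_space.measure_vimage_obs_pot assms(3))
qed simp

section \<open>Constructing observationally equivalent laws\<close>

lemma step_weights:
  fixes p c m m' v :: real
  assumes p: "0 \<le> p" and m: "0 \<le> m" and m': "0 \<le> m'" and total: "m + m' = p + c"
    and lb: "max ((m - c) / p) 0 \<le> v" and ub: "v \<le> min (m / p) 1"
  defines "a \<equiv> (if m = 0 then 0 else p * v / m)"
    and "b \<equiv> (if m' = 0 then 0 else p * (1 - v) / m')"
  shows "0 \<le> a" "a \<le> 1" "0 \<le> b" "b \<le> 1" "a * m + b * m' = p" "a * m / p = v"
proof -
  have v: "0 \<le> v" "v \<le> 1"
    using lb ub by simp_all
  have below: "p * v \<le> m" and above: "p * (1 - v) \<le> m'" and degenerate: "p = 0 \<Longrightarrow> v = 0"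
  proof -
    show "p * v \<le> m"
    proof (cases "p = 0")
      case False
      then show ?thesis
        using ub p by (simp add: field_simps)
    qed (use m in simp)
    show "p * (1 - v) \<le> m'"
    proof (cases "p = 0")
      case False
      then have "m - c \<le> p * v"
        using lb p by (simp add: field_simps)
      then show ?thesis
        using total by (simp add: algebra_simps)
    qed (use m' in simp)
    show "p = 0 \<Longrightarrow> v = 0"
      using ub v by simp
  qed
  have am: "a * m = p * v"
  proof (cases "m = 0")
    case True
    then have "p * v = 0"
      using below mult_nonneg_nonneg[of p v] p v by linarith
    then show ?thesis
      by (simp add: a_def True)
  qed (simp add: a_def)
  have bm: "b * m' = p * (1 - v)"
  proof (cases "m' = 0")
    case True
    then have "p * (1 - v) = 0"
      using above mult_nonneg_nonneg[of p "1 - v"] p v by linarith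
    then show ?thesis
      by (simp add: b_def True)
  qed (simp add: b_def)
  show "0 \<le> a" "0 \<le> b"
    using p v m m' by (simp_all add: a_def b_def)
  show "a \<le> 1" "b \<le> 1"
    using below above m m' by (simp_all add: a_def b_def divide_le_eq_1)
  show "a * m + b * m' = p"
    using am bm by (simp add: algebra_simps)
  show "a * m / p = v"
    using am degenerate p by (cases "p = 0") simp_all
qed

definition reweight :: "real measure \<Rightarrow> real \<Rightarrow> real \<Rightarrow> real \<Rightarrow> real measure" where
  "reweight \<nu> a b y = density \<nu> (\<lambda>x. ennreal (if x \<le> y then a else b))"

lemma sets_reweight [simp]: "sets (reweight \<nu> a b y) = sets \<nu>"
  by (simp add: reweight_def)

definition decomposes :: "real measure \<Rightarrow> real measure \<Rightarrow> real measure \<Rightarrow> bool" where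
  "decomposes \<nu> X X' \<longleftrightarrow> finite_measure X \<and> finite_measure X' \<and> sets X = sets borel \<and> sets X' = sets borel
     \<and> (\<forall>E \<in> sets borel. measure X E + measure X' E = measure \<nu> E)"

context
  fixes \<nu> :: "real measure"
  assumes finite: "finite_measure \<nu>" and sets: "sets \<nu> = sets borel"
begin

interpretation finite_measure \<nu> by (fact finite)

lemma measure_split_at:
  assumes "E \<in> sets borel"
  shows "measure \<nu> E = measure \<nu> (E \<inter> {..y}) + measure \<nu> (E \<inter> {y<..})"
proof -
  have "measure \<nu> ((E \<inter> {..y}) \<union> (E \<inter> {y<..})) = measure \<nu> (E \<inter> {..y}) + measure \<nu> (E \<inter> {y<..})"
    by (rule finite_measure_Union) (use assms sets in auto)
  moreover have "(E \<inter> {..y}) \<union> (E \<inter> {y<..}) = E"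
    by auto
  ultimately show ?thesis by simp
qed

lemma emeasure_reweight:
  assumes "E \<in> sets borel"
  shows "emeasure (reweight \<nu> a b y) E
    = ennreal a * emeasure \<nu> (E \<inter> {..y}) + ennreal b * emeasure \<nu> (E \<inter> {y<..})"
proof -
  have "(\<lambda>x::real. ennreal (if x \<le> y then a else b)) \<in> borel_measurable borel"
    by measurable
  then have f: "(\<lambda>x. ennreal (if x \<le> y then a else b)) \<in> borel_measurable \<nu>"
    using measurable_cong_sets[OF sets refl] by blast
  have E: "E \<in> sets \<nu>" "E \<inter> {..y} \<in> sets \<nu>" "E \<inter> {y<..} \<in> sets \<nu>"
    using assms sets by simp_all
  have "emeasure (reweight \<nu> a b y) E = (\<integral>\<^sup>+ x. ennreal (if x \<le> y then a else b) * indicator E x \<partial>\<nu>)"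
    unfolding reweight_def using f E(1) by (rule emeasure_density)
  also have "\<dots> = (\<integral>\<^sup>+ x. ennreal a * indicator (E \<inter> {..y}) x + ennreal b * indicator (E \<inter> {y<..}) x \<partial>\<nu>)"
    by (rule nn_integral_cong) (auto simp: indicator_def)
  also have "\<dots> = (\<integral>\<^sup>+ x. ennreal a * indicator (E \<inter> {..y}) x \<partial>\<nu>) + (\<integral>\<^sup>+ x. ennreal b * indicator (E \<inter> {y<..}) x \<partial>\<nu>)"
    by (rule nn_integral_add) (use E in auto)
  also have "\<dots> = ennreal a * emeasure \<nu> (E \<inter> {..y}) + ennreal b * emeasure \<nu> (E \<inter> {y<..})"
    using E by (simp add: nn_integral_cmult_indicator)
  finally show ?thesis .
qed

lemma measure_reweight:
  assumes "E \<in> sets borel" "0 \<le> a" "0 \<le> b"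
  shows "measure (reweight \<nu> a b y) E = a * measure \<nu> (E \<inter> {..y}) + b * measure \<nu> (E \<inter> {y<..})"
proof -
  have "emeasure (reweight \<nu> a b y) E = ennreal (a * measure \<nu> (E \<inter> {..y}) + b * measure \<nu> (E \<inter> {y<..}))"
    using emeasure_reweight[OF assms(1)] assms(2,3)
    by (simp add: emeasure_eq_measure ennreal_mult'[symmetric] ennreal_plus[symmetric] del: ennreal_plus)
  moreover have "0 \<le> a * measure \<nu> (E \<inter> {..y}) + b * measure \<nu> (E \<inter> {y<..})"
    using assms(2,3) by simp
  ultimately show ?thesis
    unfolding measure_def by simp
qed

lemma finite_measure_reweight: "finite_measure (reweight \<nu> a b y)"
proof (rule finite_measureI)
  have "space (reweight \<nu> a b y) = UNIV"
    using sets_eq_imp_space_eq[of "reweight \<nu> a b y" borel] sets by simp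
  moreover have "emeasure (reweight \<nu> a b y) UNIV
      = ennreal a * emeasure \<nu> (UNIV \<inter> {..y}) + ennreal b * emeasure \<nu> (UNIV \<inter> {y<..})"
    by (rule emeasure_reweight) simp
  ultimately show "emeasure (reweight \<nu> a b y) (space (reweight \<nu> a b y)) \<noteq> \<infinity>"
    by (simp add: emeasure_eq_measure ennreal_mult_eq_top_iff)
qed

lemma decomposes_reweight:
  assumes "0 \<le> a" "a \<le> 1" "0 \<le> b" "b \<le> 1"
  shows "decomposes \<nu> (reweight \<nu> a b y) (reweight \<nu> (1 - a) (1 - b) y)"
  unfolding decomposes_def
proof (intro conjI ballI finite_measure_reweight)
  show "sets (reweight \<nu> a b y) = sets borel" "sets (reweight \<nu> (1 - a) (1 - b) y) = sets borel"
    using sets by simp_all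
  fix E :: "real set" assume E: "E \<in> sets borel"
  show "measure (reweight \<nu> a b y) E + measure (reweight \<nu> (1 - a) (1 - b) y) E = measure \<nu> E"
    using measure_reweight[OF E, of a b y] measure_reweight[OF E, of "1 - a" "1 - b" y]
      measure_split_at[OF E, of y] assms
    by (simp add: algebra_simps)
qed

lemma measure_reweight_atMost:
  assumes "0 \<le> a" "0 \<le> b"
  shows "measure (reweight \<nu> a b y) {..y} = a * measure \<nu> {..y}"
proof -
  have "{..y} \<inter> {y<..} = ({} :: real set)"
    by auto
  then show ?thesis
    using measure_reweight[of "{..y}" a b y] assms by simp
qed

lemma exists_decomposition_cdf:
  assumes "0 \<le> p" "measure \<nu> UNIV = p + c"
    and "max ((measure \<nu> {..y} - c) / p) 0 \<le> v" "v \<le> min (measure \<nu> {..y} / p) 1"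
  obtains X X' where "decomposes \<nu> X X'" "measure X UNIV = p" "measure X {..y} / p = v"
proof -
  have "measure \<nu> {..y} + measure \<nu> {y<..} = p + c"
    using measure_split_at[of UNIV y] assms(2) by simp
  note w = step_weights[OF assms(1) measure_nonneg measure_nonneg this assms(3,4)]
  define a where "a = (if measure \<nu> {..y} = 0 then 0 else p * v / measure \<nu> {..y})"
  define b where "b = (if measure \<nu> {y<..} = 0 then 0 else p * (1 - v) / measure \<nu> {y<..})"
  show ?thesis
  proof
    show "decomposes \<nu> (reweight \<nu> a b y) (reweight \<nu> (1 - a) (1 - b) y)"
      using w(1-4) by (intro decomposes_reweight) (simp_all add: a_def b_def)
    show "measure (reweight \<nu> a b y) UNIV = p"
      using w(1,3,5) measure_reweight[of UNIV a b y] by (simp add: a_def b_def)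
    show "measure (reweight \<nu> a b y) {..y} / p = v"
      using w(1,3,6) measure_reweight_atMost[of a b y] by (simp add: a_def b_def)
  qed
qed

lemma exists_decomposition:
  assumes "0 \<le> q" "0 \<le> c" "measure \<nu> UNIV = q + c"
  obtains X X' where "decomposes \<nu> X X'" "measure X UNIV = q"
proof -
  define g where "g = q / (q + c)"
  have g: "0 \<le> g" "g \<le> 1" "g * (q + c) = q"
    using assms by (auto simp: g_def divide_le_eq_1)
  show ?thesis
  proof
    show "decomposes \<nu> (reweight \<nu> g g 0) (reweight \<nu> (1 - g) (1 - g) 0)"
      using g by (intro decomposes_reweight) simp_all
    show "measure (reweight \<nu> g g 0) UNIV = q"
      using g measure_reweight[of UNIV g g 0] measure_split_at[of UNIV 0] assms(3)
      by (simp add: distrib_left[symmetric])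
  qed
qed

end

definition embed_product :: "real measure \<Rightarrow> real measure \<Rightarrow> real \<Rightarrow> (real \<times> real \<Rightarrow> pot) \<Rightarrow> pot measure" where
  "embed_product X Y m f = distr (scale_measure (ennreal (1 / m)) (X \<Otimes>\<^sub>M Y)) restM f"

lemma sets_embed_product [simp]: "sets (embed_product X Y m f) = sets restM"
  by (simp add: embed_product_def)

definition equal_mass_pair :: "real measure \<Rightarrow> real measure \<Rightarrow> real \<Rightarrow> bool" where
  "equal_mass_pair X Y m \<longleftrightarrow> finite_measure X \<and> finite_measure Y \<and> sets X = sets borel \<and> sets Y = sets borel
     \<and> measure X UNIV = m \<and> measure Y UNIV = m"

context
  fixes X Y :: "real measure" and m :: real and f :: "real \<times> real \<Rightarrow> pot"
  assumes pair: "equal_mass_pair X Y m"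
    and f: "f \<in> borel \<Otimes>\<^sub>M borel \<rightarrow>\<^sub>M restM"
begin

private lemma finite: "finite_measure X" "finite_measure Y"
  and sets: "sets X = sets borel" "sets Y = sets borel"
  and mass: "measure X UNIV = m" "measure Y UNIV = m"
  using pair by (simp_all add: equal_mass_pair_def)

interpretation X: finite_measure X by (fact finite(1))
interpretation Y: finite_measure Y by (fact finite(2))

private lemma space_X: "space X = UNIV" and space_Y: "space Y = UNIV"
  using sets_eq_imp_space_eq[OF sets(1)] sets_eq_imp_space_eq[OF sets(2)] by simp_all

private lemma measure_le_mass: "measure X E \<le> m" "measure Y E \<le> m"
  using X.bounded_measure Y.bounded_measure mass by (simp_all add: space_X space_Y)

lemma emeasure_embed_product:
  assumes S: "S \<in> sets restM" and pre: "f -` S = E1 \<times> E2" and E: "E1 \<in> sets borel" "E2 \<in> sets borel"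
  shows "emeasure (embed_product X Y m f) S = ennreal (measure X E1 * measure Y E2 / m)"
proof -
  have "sets (X \<Otimes>\<^sub>M Y) = sets (borel \<Otimes>\<^sub>M borel)"
    using sets by (rule sets_pair_measure_cong)
  then have f': "f \<in> scale_measure (ennreal (1 / m)) (X \<Otimes>\<^sub>M Y) \<rightarrow>\<^sub>M restM"
    using f by (simp cong: measurable_cong_sets)
  have "space (scale_measure (ennreal (1 / m)) (X \<Otimes>\<^sub>M Y)) = UNIV"
    by (simp add: space_scale_measure space_pair_measure space_X space_Y)
  then have "emeasure (embed_product X Y m f) S = emeasure (scale_measure (ennreal (1 / m)) (X \<Otimes>\<^sub>M Y)) (E1 \<times> E2)"
    unfolding embed_product_def using f' S pre by (simp add: emeasure_distr)
  also have "\<dots> = ennreal (1 / m) * (emeasure X E1 * emeasure Y E2)"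
    using E sets by (simp add: Y.emeasure_pair_measure_Times)
  also have "\<dots> = ennreal (measure X E1 * measure Y E2 / m)"
    using mass measure_nonneg[of X UNIV]
    by (simp add: X.emeasure_eq_measure Y.emeasure_eq_measure ennreal_mult'[symmetric] ennreal_mult[symmetric] mult.commute)
  finally show ?thesis .
qed

lemma measure_embed_product:
  assumes "S \<in> sets restM" "f -` S = E1 \<times> E2" "E1 \<in> sets borel" "E2 \<in> sets borel"
  shows "measure (embed_product X Y m f) S = measure X E1 * measure Y E2 / m"
  using emeasure_embed_product[OF assms] mass measure_nonneg[of X UNIV] by (simp add: measure_def)

lemma measure_embed_product_fst:
  assumes "S \<in> sets restM" "f -` S = E \<times> UNIV" "E \<in> sets borel"
  shows "measure (embed_product X Y m f) S = measure X E"
  using measure_embed_product[OF assms(1,2,3)] measure_le_mass(1)[of E] mass measure_nonneg[of X E]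
  by (cases "m = 0") simp_all

lemma measure_embed_product_snd:
  assumes "S \<in> sets restM" "f -` S = UNIV \<times> E" "E \<in> sets borel"
  shows "measure (embed_product X Y m f) S = measure Y E"
  using measure_embed_product[OF assms(1,2) _ assms(3)] measure_le_mass(2)[of E] mass measure_nonneg[of Y E]
  by (cases "m = 0") simp_all

lemma measure_embed_product_empty:
  assumes "S \<in> sets restM" "f -` S = {}"
  shows "measure (embed_product X Y m f) S = 0"
  using measure_embed_product[OF assms(1), of "{}" "{}"] assms(2) by simp

lemma subprob_space_embed_product:
  assumes "m \<le> 1"
  shows "subprob_space (embed_product X Y m f)"
proof (rule subprob_spaceI)
  have "space (embed_product X Y m f) = UNIV"
    using sets_eq_imp_space_eq[OF sets_embed_product] by simp
  moreover have "emeasure (embed_product X Y m f) UNIV = ennreal m"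
    using emeasure_embed_product[OF sets.top[of restM], of UNIV UNIV] mass by simp
  ultimately show "emeasure (embed_product X Y m f) (space (embed_product X Y m f)) \<le> 1"
    "space (embed_product X Y m f) \<noteq> {}"
    using assms by simp_all
qed

end

definition type_mixture :: "(ctype \<Rightarrow> pot measure) \<Rightarrow> pot measure" where
  "type_mixture K = bind (count_space UNIV) K"

lemma UNIV_ctype: "(UNIV :: ctype set) = {TA, TN, TC, TDF}"
  using ctype.exhaust by auto

lemma
  assumes "\<And>t. subprob_space (K t)" "\<And>t. sets (K t) = sets restM"
  shows sets_type_mixture: "sets (type_mixture K) = sets restM"
    and emeasure_type_mixture:
      "S \<in> sets restM \<Longrightarrow> emeasure (type_mixture K) S = (\<Sum>t\<in>UNIV. emeasure (K t) S)"
proof -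
  have nonempty: "space (count_space (UNIV :: ctype set)) \<noteq> {}"
    by simp
  show "sets (type_mixture K) = sets restM"
    unfolding type_mixture_def by (rule sets_bind[OF _ nonempty]) (simp add: assms(2))
  have K: "K \<in> count_space UNIV \<rightarrow>\<^sub>M subprob_algebra restM"
    using assms by (simp add: space_subprob_algebra)
  assume S: "S \<in> sets restM"
  have "emeasure (type_mixture K) S = (\<integral>\<^sup>+ t. emeasure (K t) S \<partial>count_space UNIV)"
    unfolding type_mixture_def by (rule emeasure_bind[OF nonempty K S])
  also have "\<dots> = (\<Sum>t\<in>UNIV. emeasure (K t) S)"
    by (rule nn_integral_count_space_finite) (simp add: UNIV_ctype)
  finally show "emeasure (type_mixture K) S = (\<Sum>t\<in>UNIV. emeasure (K t) S)" .
qed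

definition embed_TA :: "real \<times> real \<Rightarrow> pot" where "embed_TA p = ((fst p, snd p, 0, 0), True, True)"
definition embed_TC :: "real \<times> real \<Rightarrow> pot" where "embed_TC p = ((fst p, 0, 0, snd p), False, True)"
definition embed_TN :: "real \<times> real \<Rightarrow> pot" where "embed_TN p = ((0, 0, fst p, snd p), False, False)"

lemma measurable_embed [measurable]:
  "embed_TA \<in> borel \<Otimes>\<^sub>M borel \<rightarrow>\<^sub>M restM"
  "embed_TC \<in> borel \<Otimes>\<^sub>M borel \<rightarrow>\<^sub>M restM"
  "embed_TN \<in> borel \<Otimes>\<^sub>M borel \<rightarrow>\<^sub>M restM"
  unfolding restM_eq embed_TA_def embed_TC_def embed_TN_def by measurable

lemma pY_pD_embed [simp]:
  "pY d z (embed_TA p) = (if d then (if z then fst p else snd p) else 0)"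
  "pY d z (embed_TC p) = (if d \<and> z then fst p else if \<not> d \<and> \<not> z then snd p else 0)"
  "pY d z (embed_TN p) = (if d then 0 else (if z then fst p else snd p))"
  "pD z (embed_TA p) = True" "pD z (embed_TC p) = z" "pD z (embed_TN p) = False"
  by (simp_all add: pY_def pD_def embed_TA_def embed_TC_def embed_TN_def split: prod.split)

locale type_parts = pot_space R for R +
  fixes XA XC YN YC :: "real measure"
  assumes decomposes_11: "decomposes (outcome_law R True True) XA XC"
    and mass_XA: "measure XA UNIV = pr_pot R (pD False)"
    and decomposes_00: "decomposes (outcome_law R False False) YN YC"
    and mass_YN: "measure YN UNIV = 1 - pr_pot R (pD True)"
begin

text \<open>
  Always-takers draw (Y11, Y10) from XA and the outcome law of Y10, compliers draw (Y11, Y00) from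
  XC and YC, never-takers draw (Y01, Y00) from the outcome law of Y01 and YN, each independently and
  normalised by the share of the type; the unobservable coordinates are set to 0.
\<close>

definition type_kernel :: "ctype \<Rightarrow> pot measure" where
  "type_kernel t = (case t of
     TA \<Rightarrow> embed_product XA (outcome_law R True False) (pr_pot R (pD False)) embed_TA
   | TC \<Rightarrow> embed_product XC YC (pr_pot R (pD True) - pr_pot R (pD False)) embed_TC
   | TN \<Rightarrow> embed_product (outcome_law R False True) YN (1 - pr_pot R (pD True)) embed_TN
   | TDF \<Rightarrow> null_measure restM)"

definition glued_law :: "pot measure" where
  "glued_law = type_mixture type_kernel"

lemma mass_XC_YC:
  "measure XC UNIV = pr_pot R (pD True) - pr_pot R (pD False)"
  "measure YC UNIV = pr_pot R (pD True) - pr_pot R (pD False)"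
  using decomposes_11 decomposes_00 mass_XA mass_YN mass_outcome_law
  by (auto simp: decomposes_def dest!: bspec[of _ _ UNIV])

lemma equal_mass_pairs:
  "equal_mass_pair XA (outcome_law R True False) (pr_pot R (pD False))"
  "equal_mass_pair XC YC (pr_pot R (pD True) - pr_pot R (pD False))"
  "equal_mass_pair (outcome_law R False True) YN (1 - pr_pot R (pD True))"
  using decomposes_11 decomposes_00 mass_XA mass_YN mass_XC_YC mass_outcome_law finite_measure_outcome_law
  by (auto simp: equal_mass_pair_def decomposes_def)

lemma type_kernel_simps:
  "type_kernel TA = embed_product XA (outcome_law R True False) (pr_pot R (pD False)) embed_TA"
  "type_kernel TC = embed_product XC YC (pr_pot R (pD True) - pr_pot R (pD False)) embed_TC"
  "type_kernel TN = embed_product (outcome_law R False True) YN (1 - pr_pot R (pD True)) embed_TN"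
  "type_kernel TDF = null_measure restM"
  by (simp_all add: type_kernel_def)

lemma sets_type_kernel: "sets (type_kernel t) = sets restM"
  by (cases t) (simp_all add: type_kernel_simps)

lemma subprob_space_type_kernel: "subprob_space (type_kernel t)"
proof -
  have "pr_pot R (pD True) - pr_pot R (pD False) \<le> 1"
    using pr_pot_le_1[of "pD True"] pr_pot_nonneg[of R "pD False"] by linarith
  then show ?thesis
    by (cases t) (simp_all add: type_kernel_simps equal_mass_pairs subprob_space_embed_product pr_pot_le_1
        pr_pot_nonneg subprob_space_null_measure)
qed

lemma emeasure_glued_law:
  assumes "S \<in> sets restM"
  shows "emeasure glued_law S = ennreal (measure (type_kernel TA) S + measure (type_kernel TC) S + measure (type_kernel TN) S)"
proof -
  have "emeasure (type_kernel t) S = ennreal (measure (type_kernel t) S)" for t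
  proof -
    interpret subprob_space "type_kernel t" by (rule subprob_space_type_kernel)
    show ?thesis by (rule emeasure_eq_measure)
  qed
  then show ?thesis
    using assms by (simp add: glued_law_def emeasure_type_mixture subprob_space_type_kernel sets_type_kernel UNIV_ctype
        type_kernel_simps(4) ennreal_plus[symmetric] del: ennreal_plus)
qed

lemma measure_glued_law:
  "S \<in> sets restM \<Longrightarrow> measure glued_law S = measure (type_kernel TA) S + measure (type_kernel TC) S + measure (type_kernel TN) S"
  unfolding measure_def[of glued_law] by (simp add: emeasure_glued_law del: ennreal_plus)

lemma measure_type_kernel:
  assumes "S \<in> sets restM" "E \<in> sets borel"
  shows "embed_TA -` S = E \<times> UNIV \<Longrightarrow> measure (type_kernel TA) S = measure XA E"
    and "embed_TA -` S = UNIV \<times> E \<Longrightarrow> measure (type_kernel TA) S = measure (outcome_law R True False) E"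
    and "embed_TC -` S = E \<times> UNIV \<Longrightarrow> measure (type_kernel TC) S = measure XC E"
    and "embed_TC -` S = UNIV \<times> E \<Longrightarrow> measure (type_kernel TC) S = measure YC E"
    and "embed_TN -` S = E \<times> UNIV \<Longrightarrow> measure (type_kernel TN) S = measure (outcome_law R False True) E"
    and "embed_TN -` S = UNIV \<times> E \<Longrightarrow> measure (type_kernel TN) S = measure YN E"
  using measure_embed_product_fst[OF equal_mass_pairs(1) measurable_embed(1) assms(1) _ assms(2)]
    measure_embed_product_snd[OF equal_mass_pairs(1) measurable_embed(1) assms(1) _ assms(2)]
    measure_embed_product_fst[OF equal_mass_pairs(2) measurable_embed(2) assms(1) _ assms(2)]
    measure_embed_product_snd[OF equal_mass_pairs(2) measurable_embed(2) assms(1) _ assms(2)]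
    measure_embed_product_fst[OF equal_mass_pairs(3) measurable_embed(3) assms(1) _ assms(2)]
    measure_embed_product_snd[OF equal_mass_pairs(3) measurable_embed(3) assms(1) _ assms(2)]
  by (simp_all add: type_kernel_simps)

lemma measure_type_kernel_empty:
  assumes "S \<in> sets restM"
  shows "embed_TA -` S = {} \<Longrightarrow> measure (type_kernel TA) S = 0"
    and "embed_TC -` S = {} \<Longrightarrow> measure (type_kernel TC) S = 0"
    and "embed_TN -` S = {} \<Longrightarrow> measure (type_kernel TN) S = 0"
  using measure_embed_product_empty[OF equal_mass_pairs(1) measurable_embed(1) assms]
    measure_embed_product_empty[OF equal_mass_pairs(2) measurable_embed(2) assms]
    measure_embed_product_empty[OF equal_mass_pairs(3) measurable_embed(3) assms]
  by (simp_all add: type_kernel_simps)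

lemma pot_space_glued_law: "pot_space glued_law"
proof -
  have sets: "sets glued_law = sets restM"
    unfolding glued_law_def by (rule sets_type_mixture[OF subprob_space_type_kernel sets_type_kernel])
  have "emeasure glued_law UNIV = ennreal (measure XA UNIV + measure XC UNIV + measure (outcome_law R False True) UNIV)"
    using emeasure_glued_law[OF sets.top[of restM]] measure_type_kernel[OF sets.top[of restM] sets.top[of borel]]
    by simp
  then have "prob_space glued_law"
    using sets_eq_imp_space_eq[OF sets] mass_XA mass_XC_YC mass_outcome_law by (intro prob_spaceI) simp
  then show ?thesis
    using sets by (rule pot_spaceI)
qed

lemma measure_glued_law_outcome:
  assumes E: "E \<in> sets borel"
  shows "measure glued_law {r. pY d z r \<in> E \<and> pD z r = d} = measure (outcome_law R d z) E"
proof -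
  have S: "{r. pY d z r \<in> E \<and> pD z r = d} \<in> sets restM" for d z
    using E by measurable
  note evaluate = measure_glued_law[OF S] measure_type_kernel[OF S E] measure_type_kernel_empty[OF S]
  have split: "measure X E + measure X' E = measure \<nu> E" if "decomposes \<nu> X X'" for \<nu> X X'
    using that E by (simp add: decomposes_def)
  have "embed_TA -` {r. pY True True r \<in> E \<and> pD True r = True} = E \<times> UNIV"
    "embed_TC -` {r. pY True True r \<in> E \<and> pD True r = True} = E \<times> UNIV"
    "embed_TN -` {r. pY True True r \<in> E \<and> pD True r = True} = {}"
    by auto
  then have TT: "measure glued_law {r. pY True True r \<in> E \<and> pD True r = True} = measure (outcome_law R True True) E"
    using split[OF decomposes_11] by (simp only: evaluate)
  have "embed_TA -` {r. pY True False r \<in> E \<and> pD False r = True} = UNIV \<times> E"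
    "embed_TC -` {r. pY True False r \<in> E \<and> pD False r = True} = {}"
    "embed_TN -` {r. pY True False r \<in> E \<and> pD False r = True} = {}"
    by auto
  then have TF: "measure glued_law {r. pY True False r \<in> E \<and> pD False r = True} = measure (outcome_law R True False) E"
    by (simp only: evaluate)
  have "embed_TA -` {r. pY False True r \<in> E \<and> pD True r = False} = {}"
    "embed_TC -` {r. pY False True r \<in> E \<and> pD True r = False} = {}"
    "embed_TN -` {r. pY False True r \<in> E \<and> pD True r = False} = E \<times> UNIV"
    by auto
  then have FT: "measure glued_law {r. pY False True r \<in> E \<and> pD True r = False} = measure (outcome_law R False True) E"
    by (simp only: evaluate)
  have "embed_TA -` {r. pY False False r \<in> E \<and> pD False r = False} = {}"
    "embed_TC -` {r. pY False False r \<in> E \<and> pD False r = False} = UNIV \<times> E"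
    "embed_TN -` {r. pY False False r \<in> E \<and> pD False r = False} = UNIV \<times> E"
    by auto
  then have FF: "measure glued_law {r. pY False False r \<in> E \<and> pD False r = False} = measure (outcome_law R False False) E"
    using split[OF decomposes_00] by (simp only: evaluate)
  show ?thesis
    using TT TF FT FF by (cases d; cases z) simp_all
qed

lemma pr_pot_glued_TDF: "pr_pot glued_law (is_type TDF) = 0"
proof -
  have "embed_TA -` {r. is_type TDF r} = {}" "embed_TC -` {r. is_type TDF r} = {}"
    "embed_TN -` {r. is_type TDF r} = {}"
    by auto
  then show ?thesis
    using measure_glued_law measure_type_kernel_empty by (simp add: pr_pot_def del: is_type.simps)
qed

lemma pr_pot_glued_TA:
  assumes E: "E \<in> sets borel"
  shows "pr_pot glued_law (\<lambda>r. pY True True r \<in> E \<and> is_type TA r) = measure XA E"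
proof -
  have "{r. pY True True r \<in> E \<and> is_type TA r} \<in> sets restM"
    using E by measurable
  moreover have "embed_TA -` {r. pY True True r \<in> E \<and> is_type TA r} = E \<times> UNIV"
    "embed_TC -` {r. pY True True r \<in> E \<and> is_type TA r} = {}"
    "embed_TN -` {r. pY True True r \<in> E \<and> is_type TA r} = {}"
    by auto
  ultimately show ?thesis
    unfolding pr_pot_def by (simp only: measure_glued_law measure_type_kernel[OF _ E] measure_type_kernel_empty)
qed

lemma pr_pot_glued_TN:
  assumes E: "E \<in> sets borel"
  shows "pr_pot glued_law (\<lambda>r. pY False False r \<in> E \<and> is_type TN r) = measure YN E"
proof -
  have "{r. pY False False r \<in> E \<and> is_type TN r} \<in> sets restM"
    using E by measurable
  moreover have "embed_TA -` {r. pY False False r \<in> E \<and> is_type TN r} = {}"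
    "embed_TC -` {r. pY False False r \<in> E \<and> is_type TN r} = {}"
    "embed_TN -` {r. pY False False r \<in> E \<and> is_type TN r} = UNIV \<times> E"
    by auto
  ultimately show ?thesis
    unfolding pr_pot_def by (simp only: measure_glued_law measure_type_kernel[OF _ E] measure_type_kernel_empty)
qed

lemma outcome_law_glued_law: "outcome_law glued_law d z = outcome_law R d z"
proof (rule measure_eqI)
  fix E assume "E \<in> sets (outcome_law glued_law d z)"
  then have E: "E \<in> sets borel" by simp
  show "emeasure (outcome_law glued_law d z) E = emeasure (outcome_law R d z) E"
    using pot_space.emeasure_outcome_law[OF pot_space_glued_law E] emeasure_outcome_law[OF E]
      measure_glued_law_outcome[OF E] measure_outcome_law[OF E]
    by (simp add: pr_pot_def)
qed simp

end

locale iv_model =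
  fixes P :: "latent measure"
  assumes latent: "latent_dist P" and RA: "RA P" and MON: "MON P"
    and first_stage: "cpr P Dv Zv - cpr P Dv (\<lambda>w. \<not> Zv w) > 0"
begin

definition B :: "bool measure" where "B = distr P (count_space UNIV) fst"
definition R :: "pot measure" where "R = distr P restM snd"

lemma law: "product_law P B R"
  unfolding B_def R_def using latent RA by (rule RA_imp_product_law)

sublocale R: pot_space R
  using law by (simp add: product_law_def)

lemma instrument_positive: "0 < measure B {z}"
  using law latent by (rule instrument_pos)

lemma observed:
  "cpr P Dv Zv = pr_pot R (pD True)"
  "cpr P Dv (\<lambda>w. \<not> Zv w) = pr_pot R (pD False)"
  "cpr P (\<lambda>w. \<not> Dv w) Zv = pr_pot R (\<lambda>r. \<not> pD True r)"
  "cpr P (\<lambda>w. Yv w \<le> y \<and> Dv w) Zv = pr_pot R (\<lambda>r. pY True True r \<le> y \<and> pD True r)"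
  "cpr P (\<lambda>w. Yv w \<le> y \<and> \<not> Dv w) (\<lambda>w. \<not> Zv w) = pr_pot R (\<lambda>r. pY False False r \<le> y \<and> \<not> pD False r)"
  "cpr P (\<lambda>w. Yv w \<le> y) (\<lambda>w. Dv w \<and> \<not> Zv w) = pr_pot R (\<lambda>r. pY True False r \<le> y \<and> pD False r) / pr_pot R (pD False)"
  "cpr P (\<lambda>w. Yv w \<le> y) (\<lambda>w. \<not> Dv w \<and> Zv w) = pr_pot R (\<lambda>r. pY False True r \<le> y \<and> \<not> pD True r) / pr_pot R (\<lambda>r. \<not> pD True r)"
  using cpr_Y_D_given_Z[OF law instrument_positive, of UNIV True True]
    cpr_Y_D_given_Z[OF law instrument_positive, of UNIV False True]
    cpr_Y_D_given_Z[OF law instrument_positive, of UNIV True False]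
    cpr_Y_D_given_Z[OF law instrument_positive, of "{..y}" True True]
    cpr_Y_D_given_Z[OF law instrument_positive, of "{..y}" False False]
    cpr_Y_given_D_Z[OF law instrument_positive, of "{..y}" True False]
    cpr_Y_given_D_Z[OF law instrument_positive, of "{..y}" False True]
  by simp_all

lemma types_identified:
  shows "pr_pot R (is_type TDF) = 0"
    and "pr_pot R (is_type TC) = pr_pot R (pD True) - pr_pot R (pD False)"
    and "pr_pot R (is_type TA) = pr_pot R (pD False)"
    and "pr_pot R (is_type TN) = pr_pot R (\<lambda>r. \<not> pD True r)"
  using R.type_probabilities MON_product_law[OF law] MON first_stage observed(1,2) by auto

lemma complier_share_pos: "0 < pr_pot R (is_type TC)"
  using first_stage by (simp add: observed types_identified)

lemma ptype_identified:
  "ptype P TC = cpr P Dv Zv - cpr P Dv (\<lambda>w. \<not> Zv w)"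
  "ptype P TA = cpr P Dv (\<lambda>w. \<not> Zv w)"
  "ptype P TN = cpr P (\<lambda>w. \<not> Dv w) Zv"
  "ptype P TDF = 0"
  by (simp_all add: ptype_product_law[OF law] observed types_identified)

lemma F11a_bounds:
  "F11a_LB P y \<le> Fdzt P True True TA y"
  "Fdzt P True True TA y \<le> F11a_UB P y"
  "Fdzt P True True TC y =
    (cpr P (\<lambda>w. Yv w \<le> y \<and> Dv w) Zv - ptype P TA * Fdzt P True True TA y) / ptype P TC"
  using R.type_cdf_bounds[OF _ R.pr_pot_types(1) complier_share_pos, of "\<lambda>r. pY True True r \<le> y"]
  by (simp_all add: F11a_LB_def F11a_UB_def Fdzt_product_law[OF law] ptype_product_law[OF law] observed
      del: is_type.simps)

lemma F00n_bounds:
  "F00n_LB P y \<le> Fdzt P False False TN y"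
  "Fdzt P False False TN y \<le> F00n_UB P y"
  "Fdzt P False False TC y =
    (cpr P (\<lambda>w. Yv w \<le> y \<and> \<not> Dv w) (\<lambda>w. \<not> Zv w) - ptype P TN * Fdzt P False False TN y) / ptype P TC"
  using R.type_cdf_bounds[OF _ R.pr_pot_types(2) complier_share_pos, of "\<lambda>r. pY False False r \<le> y"]
  by (simp_all add: F00n_LB_def F00n_UB_def Fdzt_product_law[OF law] ptype_product_law[OF law] observed
      del: is_type.simps)

lemma F10a_identified: "Fdzt P True False TA y = cpr P (\<lambda>w. Yv w \<le> y) (\<lambda>w. Dv w \<and> \<not> Zv w)"
  using R.pr_pot_types(3)[of "\<lambda>r. pY True False r \<le> y"]
    R.pr_pot_null_type[OF types_identified(1), of "\<lambda>r. pY True False r \<le> y"]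
  by (simp add: Fdzt_product_law[OF law] observed types_identified del: is_type.simps)

lemma F01n_identified: "Fdzt P False True TN y = cpr P (\<lambda>w. Yv w \<le> y) (\<lambda>w. \<not> Dv w \<and> Zv w)"
  using R.pr_pot_types(4)[of "\<lambda>r. pY False True r \<le> y"]
    R.pr_pot_null_type[OF types_identified(1), of "\<lambda>r. pY False True r \<le> y"]
  by (simp add: Fdzt_product_law[OF law] observed types_identified del: is_type.simps)

lemma never_taker_share: "pr_pot R (is_type TN) = 1 - pr_pot R (pD True)"
  using types_identified(4) R.pr_pot_compl[of "pD True"] by simp

lemma mass_outcome_law_11:
  "measure (outcome_law R True True) UNIV = pr_pot R (pD False) + pr_pot R (is_type TC)"
  using R.mass_outcome_law(1) types_identified(2) by simp

lemma mass_outcome_law_00: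
  "measure (outcome_law R False False) UNIV = (1 - pr_pot R (pD True)) + pr_pot R (is_type TC)"
  using R.mass_outcome_law(2) types_identified(2) by simp

lemma glued_model:
  assumes "type_parts R XA XC YN YC"
  shows "\<exists>Q. latent_dist Q \<and> RA Q \<and> MON Q \<and> same_obs P Q
    \<and> Fdzt Q True True TA y = measure XA {..y} / measure XA UNIV
    \<and> Fdzt Q False False TN y = measure YN {..y} / measure YN UNIV"
proof -
  interpret type_parts R XA XC YN YC by fact
  have law': "product_law (B \<Otimes>\<^sub>M glued_law) B glued_law"
    using law pot_space_glued_law by (simp add: product_law_def)
  have "Fdzt (B \<Otimes>\<^sub>M glued_law) True True TA y = measure XA {..y} / measure XA UNIV"
    "Fdzt (B \<Otimes>\<^sub>M glued_law) False False TN y = measure YN {..y} / measure YN UNIV"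
    using pr_pot_glued_TA[of "{..y}"] pr_pot_glued_TA[of UNIV] pr_pot_glued_TN[of "{..y}"] pr_pot_glued_TN[of UNIV]
    by (simp_all add: Fdzt_product_law[OF law'] del: is_type.simps)
  moreover have "latent_dist (B \<Otimes>\<^sub>M glued_law)"
    using latent_dist_product_law[OF law] latent_dist_product_law[OF law'] latent by simp
  moreover have "MON (B \<Otimes>\<^sub>M glued_law)"
    using MON_product_law[OF law'] pr_pot_glued_TDF by simp
  ultimately show ?thesis
    using product_law_RA[OF law'] same_obs_product_law[OF law law' outcome_law_glued_law] by blast
qed

lemma F11a_sharp:
  assumes "F11a_LB P y \<le> v" "v \<le> F11a_UB P y"
  shows "\<exists>Q. latent_dist Q \<and> RA Q \<and> MON Q \<and> same_obs P Q \<and> Fdzt Q True True TA y = v"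
proof -
  have bounds: "max ((measure (outcome_law R True True) {..y} - pr_pot R (is_type TC)) / pr_pot R (pD False)) 0 \<le> v"
    "v \<le> min (measure (outcome_law R True True) {..y} / pr_pot R (pD False)) 1"
    using assms by (simp_all add: F11a_LB_def F11a_UB_def R.measure_outcome_law observed
        ptype_product_law[OF law] types_identified(3) del: is_type.simps)
  obtain XA XC where XA: "decomposes (outcome_law R True True) XA XC"
    "measure XA UNIV = pr_pot R (pD False)" "measure XA {..y} / pr_pot R (pD False) = v"
    by (rule exists_decomposition_cdf[OF R.finite_measure_outcome_law sets_outcome_law pr_pot_nonneg
          mass_outcome_law_11 bounds])
  obtain YN YC where YN: "decomposes (outcome_law R False False) YN YC"
    "measure YN UNIV = 1 - pr_pot R (pD True)"
    by (rule exists_decomposition[OF R.finite_measure_outcome_law sets_outcome_law _ pr_pot_nonneg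
          mass_outcome_law_00]) (use R.pr_pot_le_1 in simp)
  have "type_parts R XA XC YN YC"
    using XA YN by unfold_locales
  then show ?thesis
    using glued_model XA(2,3) by metis
qed

lemma F00n_sharp:
  assumes "F00n_LB P y \<le> v" "v \<le> F00n_UB P y"
  shows "\<exists>Q. latent_dist Q \<and> RA Q \<and> MON Q \<and> same_obs P Q \<and> Fdzt Q False False TN y = v"
proof -
  have bounds: "max ((measure (outcome_law R False False) {..y} - pr_pot R (is_type TC)) / (1 - pr_pot R (pD True))) 0 \<le> v"
    "v \<le> min (measure (outcome_law R False False) {..y} / (1 - pr_pot R (pD True))) 1"
    using assms by (simp_all add: F00n_LB_def F00n_UB_def R.measure_outcome_law observed
        ptype_product_law[OF law] never_taker_share del: is_type.simps)
  obtain YN YC where YN: "decomposes (outcome_law R False False) YN YC"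
    "measure YN UNIV = 1 - pr_pot R (pD True)" "measure YN {..y} / (1 - pr_pot R (pD True)) = v"
    by (rule exists_decomposition_cdf[OF R.finite_measure_outcome_law sets_outcome_law _
          mass_outcome_law_00 bounds]) (use R.pr_pot_le_1 in simp)
  obtain XA XC where XA: "decomposes (outcome_law R True True) XA XC"
    "measure XA UNIV = pr_pot R (pD False)"
    by (rule exists_decomposition[OF R.finite_measure_outcome_law sets_outcome_law pr_pot_nonneg pr_pot_nonneg
          mass_outcome_law_11])
  have "type_parts R XA XC YN YC"
    using XA YN by unfold_locales
  then show ?thesis
    using glued_model YN(2,3) by metis
qed

end

theorem proposition3:
  fixes P :: "latent measure"
  assumes "latent_dist P" and "RA P" and "MON P"
    and "cpr P Dv Zv - cpr P Dv (\<lambda>w. \<not> Zv w) > 0"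
  shows "ptype P TC = cpr P Dv Zv - cpr P Dv (\<lambda>w. \<not> Zv w)
    \<and> ptype P TA = cpr P Dv (\<lambda>w. \<not> Zv w)
    \<and> ptype P TN = cpr P (\<lambda>w. \<not> Dv w) Zv
    \<and> ptype P TDF = 0
    \<and> (\<forall>y. F11a_LB P y \<le> Fdzt P True True TA y \<and> Fdzt P True True TA y \<le> F11a_UB P y)
    \<and> (\<forall>y. F00n_LB P y \<le> Fdzt P False False TN y \<and> Fdzt P False False TN y \<le> F00n_UB P y)
    \<and> (\<forall>y. Fdzt P True True TC y =
          (cpr P (\<lambda>w. Yv w \<le> y \<and> Dv w) Zv - ptype P TA * Fdzt P True True TA y) / ptype P TC)
    \<and> (\<forall>y. Fdzt P False False TC y =
          (cpr P (\<lambda>w. Yv w \<le> y \<and> \<not> Dv w) (\<lambda>w. \<not> Zv w) - ptype P TN * Fdzt P False False TN y)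
            / ptype P TC)
    \<and> (\<forall>y. Fdzt P True False TA y = cpr P (\<lambda>w. Yv w \<le> y) (\<lambda>w. Dv w \<and> \<not> Zv w))
    \<and> (\<forall>y. Fdzt P False True TN y = cpr P (\<lambda>w. Yv w \<le> y) (\<lambda>w. \<not> Dv w \<and> Zv w))
    \<and> (\<forall>y v. F11a_LB P y \<le> v \<and> v \<le> F11a_UB P y \<longrightarrow>
          (\<exists>Q. latent_dist Q \<and> RA Q \<and> MON Q \<and> same_obs P Q \<and> Fdzt Q True True TA y = v))
    \<and> (\<forall>y v. F00n_LB P y \<le> v \<and> v \<le> F00n_UB P y \<longrightarrow>
          (\<exists>Q. latent_dist Q \<and> RA Q \<and> MON Q \<and> same_obs P Q \<and> Fdzt Q False False TN y = v))"
proof -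
  interpret iv_model P
    using assms by unfold_locales
  show ?thesis
    using ptype_identified F11a_bounds F00n_bounds F10a_identified F01n_identified F11a_sharp F00n_sharp
    by blast
qed

end
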